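(* Let $R\in(0,\pi/2)$ and consider on $(0,\pi)$ the system $\boldsymbol f'=A\boldsymbol f$ with \[A=\frac{1}{\sin s}\begin{pmatrix}-3\cos s&3\cos s\\ \cos R-\cos s&\cos s-\cos R\end{pmatrix}.\] Then a fundamental matrix of solutions (whose columns are solutions) is \[\boldsymbol\phi(s)=\begin{pmatrix}1&(1-\cos R\cos s+\cos^2s)\csc^2s\,(\cot\frac s2)^{\cos R}\\ 1&(\cos^2s-\cos R\cos s-\frac13\sin^2R)\csc^2s\,(\cot\frac s2)^{\cos R}\end{pmatrix}.\] Moreover, if $\boldsymbol f=(f_1,f_2)$ is the solution with $\boldsymbol f(R)\sin^4R=\cos R\,(3,2)$ and $h(s):=f_2(s)\sin^3s$, then \[h(s)=\underline c\Big\{(1+2\csc^2R)\sin^3s+\big(\cos^2s-\cos R\cos s-\tfrac13\sin^2R\big)\sin s\Big(\frac{\cot(s/2)}{\cot(R/2)}\Big)^{\cos R}\Big\},\qquad \underline c:=\frac{3\cos R\csc^2R}{3+\sin^2R}.\] *)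

theory Defs
  imports "HOL-Analysis.Analysis"
begin

definition csc :: "real \<Rightarrow> real" where
  "csc x = 1 / sin x"

definition A :: "real \<Rightarrow> real \<Rightarrow> real ^ 2 ^ 2" where
  "A R s = (\<chi> i j. (1 / sin s) *
      (if i = 1 then (if j = 1 then - 3 * cos s else 3 * cos s)
       else (if j = 1 then cos R - cos s else cos s - cos R)))"

definition is_solution :: "real \<Rightarrow> (real \<Rightarrow> real ^ 2) \<Rightarrow> bool" where
  "is_solution R f \<longleftrightarrow>
     (\<forall>s\<in>{0<..<pi}. (f has_vector_derivative (A R s *v f s)) (at s))"

definition phi :: "real \<Rightarrow> real \<Rightarrow> real ^ 2 ^ 2" where
  "phi R s = (\<chi> i j.
      if j = 1 then 1
      else if i = 1 then (1 - cos R * cos s + (cos s)\<^sup>2) * (csc s)\<^sup>2 * (cot (s / 2)) powr (cos R)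
      else ((cos s)\<^sup>2 - cos R * cos s - (sin R)\<^sup>2 / 3) * (csc s)\<^sup>2 * (cot (s / 2)) powr (cos R))"

definition fundamental_matrix :: "real \<Rightarrow> (real \<Rightarrow> real ^ 2 ^ 2) \<Rightarrow> bool" where
  "fundamental_matrix R \<Phi> \<longleftrightarrow>
     (\<forall>j. is_solution R (\<lambda>s. column j (\<Phi> s))) \<and>
     (\<forall>s\<in>{0<..<pi}. det (\<Phi> s) \<noteq> 0)"

end

theory Submission
  imports Defs
begin

text \<open>The rows of \<open>A\<close> sum to zero, so \<open>(1, 1)\<close> is a constant solution, and in terms of
  \<open>D = f\<^sub>1 - f\<^sub>2\<close> the system decouples into \<open>D' = -(2 cos s + cos R) D / sin s\<close> and
  \<open>f\<^sub>2' = (cos R - cos s) D / sin s\<close>. The scalar equation for \<open>D\<close> is solved by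
  \<open>csc\<^sup>2 s (cot (s/2)) powr cos R\<close>, and the second column of \<open>phi\<close> is the solution with
  \<open>D = (1 + sin\<^sup>2 R / 3) csc\<^sup>2 s (cot (s/2)) powr cos R\<close>, which never vanishes. Hence every
  solution is a constant plus a multiple of that column; the initial condition at \<open>R\<close> fixes both.\<close>

lemma has_vector_derivative_vec_nth_iff:
  fixes F :: "real \<Rightarrow> real ^ 'n"
  shows "(F has_vector_derivative D) (at s) \<longleftrightarrow>
    (\<forall>i. ((\<lambda>t. F t $ i) has_real_derivative D $ i) (at s))"
  unfolding has_vector_derivative_def has_field_derivative_def
  by (subst has_derivative_componentwise_within)
    (auto simp: Basis_vec_def cart_eq_inner_axis mult_commute_abs)

lemma DERIV_diff_iff:
  "(f has_real_derivative a) (at s) \<and> (g has_real_derivative b) (at s) \<longleftrightarrow>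
   ((\<lambda>t. f t - g t) has_real_derivative a - b) (at s) \<and> (g has_real_derivative b) (at s)"
proof safe
  assume "((\<lambda>t. f t - g t) has_real_derivative a - b) (at s)" "(g has_real_derivative b) (at s)"
  from DERIV_add[OF this] show "(f has_real_derivative a) (at s)" by simp
qed (rule DERIV_diff)

lemma linear_ode_solution_ratio_const:
  fixes u v p :: "real \<Rightarrow> real"
  assumes u: "\<And>t. t \<in> {a<..<b} \<Longrightarrow> (u has_real_derivative p t * u t) (at t)"
    and v: "\<And>t. t \<in> {a<..<b} \<Longrightarrow> (v has_real_derivative p t * v t) (at t)"
    and v_ne: "\<And>t. t \<in> {a<..<b} \<Longrightarrow> v t \<noteq> 0"
    and r: "r \<in> {a<..<b}" and s: "s \<in> {a<..<b}"
  shows "u s / v s = u r / v r"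
proof (rule DERIV_isconst3[OF _ s r])
  show "a < b" using r by simp
  show "((\<lambda>t. u t / v t) has_real_derivative 0) (at t)" if "t \<in> {a<..<b}" for t
    by (rule DERIV_cong[OF DERIV_divide[OF u v v_ne]]) (use that in \<open>simp_all add: algebra_simps\<close>)
qed

lemma A_mult_vec_nth:
  "(A R s *v x) $ 1 = - 3 * cos s / sin s * (x $ 1 - x $ 2)"
  "(A R s *v x) $ 2 = (cos R - cos s) / sin s * (x $ 1 - x $ 2)"
  by (simp add: A_def matrix_vector_mult_def sum_2 divide_simps, simp add: algebra_simps)+

lemma is_solution_iff_decoupled:
  "is_solution R f \<longleftrightarrow> (\<forall>s\<in>{0<..<pi}.
     ((\<lambda>t. f t $ 1 - f t $ 2) has_real_derivative
        - (2 * cos s + cos R) / sin s * (f s $ 1 - f s $ 2)) (at s) \<and>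
     ((\<lambda>t. f t $ 2) has_real_derivative (cos R - cos s) / sin s * (f s $ 1 - f s $ 2)) (at s))"
proof -
  have rate: "- 3 * cos s / sin s * d - (cos R - cos s) / sin s * d = - (2 * cos s + cos R) / sin s * d"
    for s d :: real
    by (simp only: diff_divide_distrib[symmetric] left_diff_distrib[symmetric]) (simp add: algebra_simps)
  show ?thesis
    unfolding is_solution_def has_vector_derivative_vec_nth_iff forall_2 A_mult_vec_nth
      DERIV_diff_iff[of "\<lambda>t. f t $ 1" _ _ "\<lambda>t. f t $ 2"] rate ..
qed

lemma is_solution_snd_eq:
  assumes f: "is_solution R f" and g: "is_solution R g"
    and g_ne: "\<And>t. t \<in> {0<..<pi} \<Longrightarrow> g t $ 1 - g t $ 2 \<noteq> 0"
    and r: "r \<in> {0<..<pi}" and s: "s \<in> {0<..<pi}"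
  shows "f s $ 2 = f r $ 2 + (f r $ 1 - f r $ 2) / (g r $ 1 - g r $ 2) * (g s $ 2 - g r $ 2)"
proof -
  define \<beta> where "\<beta> = (f r $ 1 - f r $ 2) / (g r $ 1 - g r $ 2)"
  note f' = f[unfolded is_solution_iff_decoupled] and g' = g[unfolded is_solution_iff_decoupled]
  have diff_proportional: "f t $ 1 - f t $ 2 = \<beta> * (g t $ 1 - g t $ 2)" if t: "t \<in> {0<..<pi}" for t
  proof -
    have "(f t $ 1 - f t $ 2) / (g t $ 1 - g t $ 2) = \<beta>"
      unfolding \<beta>_def
      by (rule linear_ode_solution_ratio_const[where p = "\<lambda>t. - (2 * cos t + cos R) / sin t"])
        (use f' g' g_ne r t in auto)
    then show ?thesis using g_ne[OF t] by (simp add: field_simps)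
  qed
  have "((\<lambda>t. f t $ 2 - \<beta> * g t $ 2) has_real_derivative 0) (at t)" if t: "t \<in> {0<..<pi}" for t
  proof -
    from f' t have f2: "((\<lambda>t. f t $ 2) has_real_derivative
        (cos R - cos t) / sin t * (f t $ 1 - f t $ 2)) (at t)" by blast
    from g' t have g2: "((\<lambda>t. g t $ 2) has_real_derivative
        (cos R - cos t) / sin t * (g t $ 1 - g t $ 2)) (at t)" by blast
    show ?thesis
      by (rule DERIV_cong[OF DERIV_diff[OF f2 DERIV_cmult[OF g2]]]) (simp add: diff_proportional[OF t])
  qed
  then have "f s $ 2 - \<beta> * g s $ 2 = f r $ 2 - \<beta> * g r $ 2"
    by (intro DERIV_isconst3[OF _ s r]) auto
  then show ?thesis unfolding \<beta>_def[symmetric] by (simp add: algebra_simps)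
qed

definition csc2_cot_half_powr :: "real \<Rightarrow> real \<Rightarrow> real" where
  "csc2_cot_half_powr k t = (csc t)\<^sup>2 * cot (t / 2) powr k"

lemma cot_half_pos: "s \<in> {0<..<pi} \<Longrightarrow> 0 < cot (s / 2)"
  by (rule cot_gt_zero) auto

lemma cot_half_pos_nonzero:
  fixes s :: real
  assumes "0 < cot (s / 2)"
  shows "sin (s / 2) \<noteq> 0" "cos (s / 2) \<noteq> 0" "sin s \<noteq> 0"
proof -
  show sh: "sin (s / 2) \<noteq> 0" and ch: "cos (s / 2) \<noteq> 0"
    using assms by (auto simp: cot_def)
  show "sin s \<noteq> 0"
    using sin_double[of "s / 2"] sh ch by simp
qed

lemma DERIV_cot_half_powr:
  fixes s k :: real
  assumes cot_pos: "0 < cot (s / 2)"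
  shows "((\<lambda>t. cot (t / 2) powr k) has_real_derivative - k / sin s * cot (s / 2) powr k) (at s)"
proof -
  note ne = cot_half_pos_nonzero[OF cot_pos]
  have cot': "((\<lambda>t. cot (t / 2)) has_real_derivative - inverse ((sin (s / 2))\<^sup>2) / 2) (at s)"
    using DERIV_chain2[OF DERIV_cot[OF ne(1)] DERIV_cdivide[OF DERIV_ident, of 2 s]] by simp
  have "sin s = 2 * sin (s / 2) * cos (s / 2)"
    using sin_double[of "s / 2"] by simp
  then have "k * cot (s / 2) powr (k - 1) * (- inverse ((sin (s / 2))\<^sup>2) / 2)
      = - k / sin s * cot (s / 2) powr k"
    using cot_pos ne by (simp add: powr_diff) (simp add: cot_def field_simps power2_eq_square)
  with DERIV_fun_powr[OF cot' cot_pos, of k] show ?thesis by simp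
qed

lemma DERIV_csc2_cot_half_powr:
  assumes cot_pos: "0 < cot (s / 2)"
  shows "(csc2_cot_half_powr k has_real_derivative
    - (2 * cos s + k) / sin s * csc2_cot_half_powr k s) (at s)"
proof -
  note ne = cot_half_pos_nonzero[OF cot_pos]
  have "((\<lambda>t. (csc t)\<^sup>2) has_real_derivative - 2 * cos s / sin s * (csc s)\<^sup>2) (at s)"
    unfolding csc_def
    by (rule derivative_eq_intros refl ne | use ne in \<open>simp add: field_simps power2_eq_square\<close>)+
  from DERIV_mult[OF this DERIV_cot_half_powr[OF cot_pos, of k]]
  show ?thesis
    unfolding csc2_cot_half_powr_def[abs_def] by (rule DERIV_cong) (use ne in \<open>simp add: field_simps\<close>)
qed

lemma csc2_cot_half_powr_pos:
  assumes "s \<in> {0<..<pi}"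
  shows "0 < csc2_cot_half_powr k s"
proof -
  have cot_pos: "0 < cot (s / 2)" using assms by (rule cot_half_pos)
  moreover have "sin s \<noteq> 0" by (rule cot_half_pos_nonzero(3)[OF cot_pos])
  ultimately show ?thesis by (simp add: csc2_cot_half_powr_def csc_def)
qed

lemma phi_col1: "phi R s $ 1 $ 1 = 1" "phi R s $ 2 $ 1 = 1"
  by (simp_all add: phi_def)

lemma phi_col2_snd:
  "phi R s $ 2 $ 2 = ((cos s)\<^sup>2 - cos R * cos s - (sin R)\<^sup>2 / 3) * csc2_cot_half_powr (cos R) s"
  by (simp add: phi_def csc2_cot_half_powr_def)

lemma phi_col2_diff:
  "phi R s $ 1 $ 2 - phi R s $ 2 $ 2 = (1 + (sin R)\<^sup>2 / 3) * csc2_cot_half_powr (cos R) s"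
  by (simp add: phi_def csc2_cot_half_powr_def algebra_simps)

lemma is_solution_phi_col1: "is_solution R (\<lambda>s. column 1 (phi R s))"
  unfolding is_solution_iff_decoupled column_def vec_lambda_beta phi_col1 by simp

lemma is_solution_phi_col2: "is_solution R (\<lambda>s. column 2 (phi R s))"
  unfolding is_solution_iff_decoupled column_def vec_lambda_beta
proof (intro ballI conjI)
  fix s :: real
  assume "s \<in> {0<..<pi}"
  then have cot_pos: "0 < cot (s / 2)" by (rule cot_half_pos)
  have sin_ne: "sin s \<noteq> 0" by (rule cot_half_pos_nonzero(3)[OF cot_pos])
  let ?k = "cos R" and ?E = "csc2_cot_half_powr (cos R)"
  note E' = DERIV_csc2_cot_half_powr[OF cot_pos, of ?k]
  show "((\<lambda>t. phi R t $ 1 $ 2 - phi R t $ 2 $ 2) has_real_derivative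
      - (2 * cos s + ?k) / sin s * (phi R s $ 1 $ 2 - phi R s $ 2 $ 2)) (at s)"
    unfolding phi_col2_diff by (rule DERIV_cong[OF DERIV_cmult[OF E']]) simp
  have p': "((\<lambda>t. (cos t)\<^sup>2 - ?k * cos t - (sin R)\<^sup>2 / 3) has_real_derivative
      (?k - 2 * cos s) * sin s) (at s)"
    by (rule derivative_eq_intros refl | simp add: algebra_simps)+
  let ?p = "(cos s)\<^sup>2 - ?k * cos s - (sin R)\<^sup>2 / 3"
  have rate: "(?k - 2 * cos s) * (sin s)\<^sup>2 - (2 * cos s + ?k) * ?p = (?k - cos s) * (1 + (sin R)\<^sup>2 / 3)"
    unfolding sin_squared_eq by (simp add: field_simps power2_eq_square)
  have "(?k - 2 * cos s) * sin s * ?E s + - (2 * cos s + ?k) / sin s * ?E s * ?p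
      = (?k - cos s) / sin s * ((1 + (sin R)\<^sup>2 / 3) * ?E s)"
  proof -
    have "(?k - 2 * cos s) * sin s * ?E s + - (2 * cos s + ?k) / sin s * ?E s * ?p
        = ((?k - 2 * cos s) * (sin s)\<^sup>2 - (2 * cos s + ?k) * ?p) / sin s * ?E s"
      using sin_ne by (simp add: field_simps power2_eq_square)
    then show ?thesis unfolding rate by simp
  qed
  with DERIV_mult[OF p' E']
  show "((\<lambda>t. phi R t $ 2 $ 2) has_real_derivative
      (?k - cos s) / sin s * (phi R s $ 1 $ 2 - phi R s $ 2 $ 2)) (at s)"
    unfolding phi_col2_diff unfolding phi_col2_snd by simp
qed

lemma phi_col2_diff_pos:
  assumes "s \<in> {0<..<pi}"
  shows "0 < phi R s $ 1 $ 2 - phi R s $ 2 $ 2"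
  unfolding phi_col2_diff using csc2_cot_half_powr_pos[OF assms]
  by (intro mult_pos_pos add_pos_nonneg) auto

lemma fundamental_matrix_phi: "fundamental_matrix R (phi R)"
  unfolding fundamental_matrix_def
proof (intro conjI allI ballI)
  show "is_solution R (\<lambda>s. column j (phi R s))" for j :: 2
    using exhaust_2[of j] is_solution_phi_col1 is_solution_phi_col2 by auto
  show "det (phi R s) \<noteq> 0" if "s \<in> {0<..<pi}" for s
    using phi_col2_diff_pos[OF that, of R] unfolding det_2 phi_col1 by simp
qed

lemma is_solution_snd_eq_phi:
  assumes "is_solution R f" and "r \<in> {0<..<pi}" and "s \<in> {0<..<pi}"
  shows "f s $ 2 = f r $ 2 + (f r $ 1 - f r $ 2) / (phi R r $ 1 $ 2 - phi R r $ 2 $ 2)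
    * (phi R s $ 2 $ 2 - phi R r $ 2 $ 2)"
proof -
  have "column 2 (phi R t) $ 1 - column 2 (phi R t) $ 2 \<noteq> 0" if "t \<in> {0<..<pi}" for t
    using phi_col2_diff_pos[OF that, of R] by (simp add: column_def)
  with is_solution_snd_eq[OF assms(1) is_solution_phi_col2 _ assms(2,3)] show ?thesis
    by (simp add: column_def)
qed

lemma is_solution_snd_closed_form:
  assumes f: "is_solution R f" and init: "(sin R) ^ 4 *\<^sub>R f R = cos R *\<^sub>R vector [3, 2]"
    and R: "R \<in> {0<..<pi}" and s: "s \<in> {0<..<pi}"
  shows "f s $ 2 * (sin s) ^ 3 = (3 * cos R * (csc R)\<^sup>2 / (3 + (sin R)\<^sup>2)) *
    ((1 + 2 * (csc R)\<^sup>2) * (sin s) ^ 3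
     + ((cos s)\<^sup>2 - cos R * cos s - (sin R)\<^sup>2 / 3) * sin s * (cot (s / 2) / cot (R / 2)) powr (cos R))"
proof -
  let ?T = "\<lambda>t. cot (t / 2) powr cos R"
  let ?p = "(cos s)\<^sup>2 - cos R * cos s - (sin R)\<^sup>2 / 3"
  define q where "q = 3 + (sin R)\<^sup>2"
  have sin_ne: "sin R \<noteq> 0" "sin s \<noteq> 0"
    using R s sin_gt_zero by force+
  have "0 < ?T R" using cot_half_pos[OF R] by simp
  have "0 < q" unfolding q_def by (intro add_pos_nonneg) auto
  have f_R: "f R $ 1 = 3 * cos R / (sin R) ^ 4" "f R $ 2 = 2 * cos R / (sin R) ^ 4"
    using arg_cong[OF init, of "\<lambda>v. v $ 1"] arg_cong[OF init, of "\<lambda>v. v $ 2"] sin_ne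
    by (simp_all add: field_simps)
  have diff_R: "phi R R $ 1 $ 2 - phi R R $ 2 $ 2 = q * ?T R / (3 * (sin R)\<^sup>2)"
    unfolding phi_col2_diff csc2_cot_half_powr_def csc_def q_def by (simp add: field_simps)
  have coeff: "(f R $ 1 - f R $ 2) / (phi R R $ 1 $ 2 - phi R R $ 2 $ 2)
      = 3 * cos R / ((sin R)\<^sup>2 * q * ?T R)"
    unfolding f_R diff_R using sin_ne \<open>0 < ?T R\<close> \<open>0 < q\<close>
    by (simp add: field_simps power2_eq_square power4_eq_xxxx)
  have incr: "phi R s $ 2 $ 2 - phi R R $ 2 $ 2 = ?p * ?T s / (sin s)\<^sup>2 + ?T R / 3"
    unfolding phi_col2_snd csc2_cot_half_powr_def csc_def
    using sin_ne by (simp add: field_simps power2_eq_square)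
  have "f s $ 2 = 2 * cos R / (sin R) ^ 4 + cos R / ((sin R)\<^sup>2 * q)
      + 3 * cos R / ((sin R)\<^sup>2 * q) * ?p * (?T s / ?T R) / (sin s)\<^sup>2"
    unfolding is_solution_snd_eq_phi[OF f R s] coeff incr unfolding f_R
    using sin_ne \<open>0 < ?T R\<close> \<open>0 < q\<close> by (simp add: field_simps)
  also have "2 * cos R / (sin R) ^ 4 + cos R / ((sin R)\<^sup>2 * q)
      = 3 * cos R / ((sin R)\<^sup>2 * q) * (1 + 2 / (sin R)\<^sup>2)"
    using sin_ne \<open>0 < q\<close> by (simp add: field_simps, unfold q_def, algebra)
  finally have sol: "f s $ 2 = 3 * cos R / ((sin R)\<^sup>2 * q) * (1 + 2 / (sin R)\<^sup>2)
      + 3 * cos R / ((sin R)\<^sup>2 * q) * ?p * (?T s / ?T R) / (sin s)\<^sup>2" .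
  show ?thesis
    unfolding sol csc_def powr_divide q_def[symmetric]
    using sin_ne \<open>0 < ?T R\<close> \<open>0 < q\<close> by (simp add: field_simps power3_eq_cube power2_eq_square)
qed

theorem propositionA1:
  fixes R :: real
  assumes "0 < R" and "R < pi / 2"
  shows "fundamental_matrix R (phi R) \<and>
    (\<forall>f. is_solution R f \<and> (sin R) ^ 4 *\<^sub>R f R = cos R *\<^sub>R vector [3, 2] \<longrightarrow>
      (\<forall>s\<in>{0<..<pi}.
         f s $ 2 * (sin s) ^ 3 =
         (3 * cos R * (csc R)\<^sup>2 / (3 + (sin R)\<^sup>2)) *
         ((1 + 2 * (csc R)\<^sup>2) * (sin s) ^ 3
          + ((cos s)\<^sup>2 - cos R * cos s - (sin R)\<^sup>2 / 3) * sin s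
            * (cot (s / 2) / cot (R / 2)) powr (cos R))))"
proof (intro conjI allI impI ballI)
  show "fundamental_matrix R (phi R)" by (rule fundamental_matrix_phi)
  fix f s
  assume f: "is_solution R f \<and> (sin R) ^ 4 *\<^sub>R f R = cos R *\<^sub>R vector [3, 2]"
    and s: "s \<in> {0<..<pi}"
  have "R \<in> {0<..<pi}" using assms by auto
  with f s show "f s $ 2 * (sin s) ^ 3 =
         (3 * cos R * (csc R)\<^sup>2 / (3 + (sin R)\<^sup>2)) *
         ((1 + 2 * (csc R)\<^sup>2) * (sin s) ^ 3
          + ((cos s)\<^sup>2 - cos R * cos s - (sin R)\<^sup>2 / 3) * sin s
            * (cot (s / 2) / cot (R / 2)) powr (cos R))"
    by (intro is_solution_snd_closed_form) auto
qed

end
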